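(* For every LTL formula $\varphi$ in positive normal form, $\Theta(\mathrm{LF}(\varphi)) \Leftrightarrow \varphi$.
   Context: LTL formulae in positive normal form (PNF) over a finite set $AP$ of atomic propositions: $\varphi,\psi ::= p \mid \neg p \mid \mathbf{tt} \mid \mathbf{ff} \mid \varphi\wedge\psi \mid \varphi\vee\psi \mid \bigcirc\varphi \mid \varphi\,\mathcal{U}\,\psi \mid \varphi\,\mathcal{R}\,\psi$, interpreted over infinite words $\sigma\in\Sigma^\omega$ with an interpretation $I:\Sigma\to\mathcal{P}(AP)$ in the standard way ($\bigcirc$ = next, $\mathcal{U}$ = until, $\mathcal{R}$ = release). A temporal formula is one not starting with a conjunction or disjunction. A literal $\ell$ is an element of $AP\cup\neg AP$. A monomial $\mu,\nu$ is either $\mathbf{ff}$ or a set of literals not containing both $\ell$ and $\neg\ell$; $\Theta(\mu)=\mathbf{ff}$ if $\mu=\mathbf{ff}$, otherwise $\Theta(\mu)=\bigwedge\mu$ (so the empty monomial, written $\mathbf{tt}$, has $\Theta=\mathbf{tt}$). Smart conjunction $\mu\sqcap\nu$ is $\mathbf{ff}$ if either is $\mathbf{ff}$ or if $\mu\cup\nu$ contains some $\ell$ and $\neg\ell$, and $\mu\cup\nu$ otherwise. $\varphi\,\dot\wedge\,\psi$ denotes formal conjunction of temporal formulae, normalized modulo associativity, commutativity and idempotence using a fixed total order on formulae ($\mathbf{tt}$ is the empty formal conjunction). $\mathrm{simp}(\varphi\wedge\psi)=\{\varphi'\,\dot\wedge\,\psi' \mid \varphi'\in\mathrm{simp}(\varphi),\psi'\in\mathrm{simp}(\psi)\}$,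 $\mathrm{simp}(\varphi\vee\psi)=\mathrm{simp}(\varphi)\cup\mathrm{simp}(\psi)$, $\mathrm{simp}(\varphi)=\{\varphi\}$ for temporal $\varphi$. Linear factors: $\mathrm{LF}(\ell)=\{\langle\{\ell\},\mathbf{tt}\rangle\}$; $\mathrm{LF}(\mathbf{tt})=\{\langle\mathbf{tt},\mathbf{tt}\rangle\}$; $\mathrm{LF}(\mathbf{ff})=\{\}$; $\mathrm{LF}(\varphi\vee\psi)=\mathrm{LF}(\varphi)\cup\mathrm{LF}(\psi)$; $\mathrm{LF}(\varphi\wedge\psi)=\{\langle\mu\sqcap\nu,\varphi'\,\dot\wedge\,\psi'\rangle \mid \langle\mu,\varphi'\rangle\in\mathrm{LF}(\varphi),\langle\nu,\psi'\rangle\in\mathrm{LF}(\psi),\mu\sqcap\nu\neq\mathbf{ff}\}$; $\mathrm{LF}(\bigcirc\varphi)=\{\langle\mathbf{tt},\varphi'\rangle\mid\varphi'\in\mathrm{simp}(\varphi)\}$; $\mathrm{LF}(\varphi\,\mathcal{U}\,\psi)=\mathrm{LF}(\psi)\cup\{\langle\mu,\varphi'\,\dot\wedge\,(\varphi\,\mathcal{U}\,\psi)\rangle\mid\langle\mu,\varphi'\rangle\in\mathrm{LF}(\varphi)\}$; $\mathrm{LF}(\varphi\,\mathcal{R}\,\psi)=\{\langle\mu\sqcap\nu,\varphi'\,\dot\wedge\,\psi'\rangle\mid\langle\mu,\varphi'\rangle\in\mathrm{LF}(\varphi),\langle\nu,\psi'\rangle\in\mathrm{LF}(\psi),\mu\sqcap\nu\neq\mathbf{ff}\}\cup\{\langle\nu,\psi'\,\dot\wedge\,(\varphi\,\mathcal{R}\,\psi)\rangle\mid\langle\nu,\psi'\rangle\in\mathrm{LF}(\psi)\}$.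 For a set of linear factors, $\Theta(\{\langle\mu_i,\varphi_i\rangle\mid i\in I\})=\bigvee_{i\in I}(\Theta(\mu_i)\wedge\bigcirc\varphi_i)$. *)

theory Defs
  imports Main
begin

datatype 'a ltl =
    Prop 'a
  | NProp 'a
  | TT
  | FF
  | And "'a ltl" "'a ltl"
  | Or "'a ltl" "'a ltl"
  | Next "'a ltl"
  | Until "'a ltl" "'a ltl"
  | Release "'a ltl" "'a ltl"

definition suffix :: "nat \<Rightarrow> (nat \<Rightarrow> 's) \<Rightarrow> (nat \<Rightarrow> 's)" where
  "suffix k \<sigma> = (\<lambda>i. \<sigma> (i + k))"

fun sat :: "('s \<Rightarrow> 'a set) \<Rightarrow> (nat \<Rightarrow> 's) \<Rightarrow> 'a ltl \<Rightarrow> bool" where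
  "sat I \<sigma> (Prop p) = (p \<in> I (\<sigma> 0))"
| "sat I \<sigma> (NProp p) = (p \<notin> I (\<sigma> 0))"
| "sat I \<sigma> TT = True"
| "sat I \<sigma> FF = False"
| "sat I \<sigma> (And \<phi> \<psi>) = (sat I \<sigma> \<phi> \<and> sat I \<sigma> \<psi>)"
| "sat I \<sigma> (Or \<phi> \<psi>) = (sat I \<sigma> \<phi> \<or> sat I \<sigma> \<psi>)"
| "sat I \<sigma> (Next \<phi>) = sat I (suffix 1 \<sigma>) \<phi>"
| "sat I \<sigma> (Until \<phi> \<psi>) =
     (\<exists>j. sat I (suffix j \<sigma>) \<psi> \<and> (\<forall>k<j. sat I (suffix k \<sigma>) \<phi>))"
| "sat I \<sigma> (Release \<phi> \<psi>) =
     (\<forall>j. sat I (suffix j \<sigma>) \<psi> \<or> (\<exists>k<j. sat I (suffix k \<sigma>) \<phi>))"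

datatype 'a lit = Pos 'a | Neg 'a

fun lit_formula :: "'a lit \<Rightarrow> 'a ltl" where
  "lit_formula (Pos p) = Prop p"
| "lit_formula (Neg p) = NProp p"

fun neg_lit :: "'a lit \<Rightarrow> 'a lit" where
  "neg_lit (Pos p) = Neg p"
| "neg_lit (Neg p) = Pos p"

text \<open>A monomial is ff (None) or a set of literals (Some L); the empty set is tt.\<close>
type_synonym 'a monomial = "'a lit set option"

fun smart_conj :: "'a monomial \<Rightarrow> 'a monomial \<Rightarrow> 'a monomial" where
  "smart_conj None _ = None"
| "smart_conj _ None = None"
| "smart_conj (Some L) (Some M) =
     (if \<exists>l \<in> L \<union> M. neg_lit l \<in> L \<union> M then None else Some (L \<union> M))"

text \<open>A formal conjunction of temporal formulae, normalized modulo associativity,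
  commutativity and idempotence, is represented canonically by the finite set of its
  conjuncts; tt is the empty formal conjunction.\<close>
type_synonym 'a fconj = "'a ltl set"

fun temporal :: "'a ltl \<Rightarrow> bool" where
  "temporal (And _ _) = False"
| "temporal (Or _ _) = False"
| "temporal _ = True"

definition fc :: "'a ltl \<Rightarrow> 'a fconj" where
  "fc \<phi> = (if \<phi> = TT then {} else {\<phi>})"

fun simp_ltl :: "'a ltl \<Rightarrow> 'a fconj set" where
  "simp_ltl (And \<phi> \<psi>) = {A \<union> B | A B. A \<in> simp_ltl \<phi> \<and> B \<in> simp_ltl \<psi>}"
| "simp_ltl (Or \<phi> \<psi>) = simp_ltl \<phi> \<union> simp_ltl \<psi>"
| "simp_ltl \<phi> = {fc \<phi>}"

primrec LF :: "'a ltl \<Rightarrow> ('a monomial \<times> 'a fconj) set" where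
  "LF (Prop p) = {(Some {Pos p}, {})}"
| "LF (NProp p) = {(Some {Neg p}, {})}"
| "LF TT = {(Some {}, {})}"
| "LF FF = {}"
| "LF (Or \<phi> \<psi>) = LF \<phi> \<union> LF \<psi>"
| "LF (And \<phi> \<psi>) = {(smart_conj \<mu> \<nu>, A \<union> B) | \<mu> A \<nu> B.
        (\<mu>, A) \<in> LF \<phi> \<and> (\<nu>, B) \<in> LF \<psi> \<and> smart_conj \<mu> \<nu> \<noteq> None}"
| "LF (Next \<phi>) = {(Some {}, A) | A. A \<in> simp_ltl \<phi>}"
| "LF (Until \<phi> \<psi>) = LF \<psi> \<union> {(\<mu>, A \<union> {Until \<phi> \<psi>}) | \<mu> A. (\<mu>, A) \<in> LF \<phi>}"
| "LF (Release \<phi> \<psi>) = {(smart_conj \<mu> \<nu>, A \<union> B) | \<mu> A \<nu> B.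
        (\<mu>, A) \<in> LF \<phi> \<and> (\<nu>, B) \<in> LF \<psi> \<and> smart_conj \<mu> \<nu> \<noteq> None}
     \<union> {(\<nu>, B \<union> {Release \<phi> \<psi>}) | \<nu> B. (\<nu>, B) \<in> LF \<psi>}"

fun big_and :: "'a ltl list \<Rightarrow> 'a ltl" where
  "big_and [] = TT"
| "big_and [\<phi>] = \<phi>"
| "big_and (\<phi> # \<phi>s) = And \<phi> (big_and \<phi>s)"

fun big_or :: "'a ltl list \<Rightarrow> 'a ltl" where
  "big_or [] = FF"
| "big_or [\<phi>] = \<phi>"
| "big_or (\<phi> # \<phi>s) = Or \<phi> (big_or \<phi>s)"

text \<open>Some enumeration of a finite set (the choice is irrelevant semantically).\<close>
definition enum_set :: "'b set \<Rightarrow> 'b list" where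
  "enum_set S = (SOME xs. set xs = S)"

definition conj_formula :: "'a fconj \<Rightarrow> 'a ltl" where
  "conj_formula A = big_and (enum_set A)"

fun Theta_mono :: "'a monomial \<Rightarrow> 'a ltl" where
  "Theta_mono None = FF"
| "Theta_mono (Some L) = big_and (map lit_formula (enum_set L))"

definition Theta_LF :: "('a monomial \<times> 'a fconj) set \<Rightarrow> 'a ltl" where
  "Theta_LF S = big_or (map (\<lambda>(\<mu>, A). And (Theta_mono \<mu>) (Next (conj_formula A))) (enum_set S))"

end

theory Submission
  imports Defs
begin

text \<open>Read a set of linear factors semantically: a word satisfies it if some factor
  \<open>(\<mu>, A)\<close> has \<open>\<mu>\<close> true now and every conjunct of \<open>A\<close> true at the next position.
  Under this reading \<open>LF\<close> is compositional (union for \<open>\<or>\<close>; pairwise smart conjunction for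
  \<open>\<and>\<close>, which only discards unsatisfiable monomials), and its Until and Release clauses are
  the expansion laws \<open>\<phi> U \<psi> \<equiv> \<psi> \<or> (\<phi> \<and> X(\<phi> U \<psi>))\<close> and
  \<open>\<phi> R \<psi> \<equiv> (\<phi> \<and> \<psi>) \<or> (\<psi> \<and> X(\<phi> R \<psi>))\<close>; so by induction the reading of \<open>LF \<phi>\<close> is
  equivalent to \<open>\<phi>\<close>. \<open>\<Theta>\<close> expresses exactly this reading because \<open>LF \<phi>\<close>, its monomials
  and its formal conjunctions are finite, so the enumerations chosen inside \<open>\<Theta>\<close> are complete.\<close>

lemma sat_big_and: "sat I \<sigma> (big_and \<phi>s) \<longleftrightarrow> (\<forall>\<phi>\<in>set \<phi>s. sat I \<sigma> \<phi>)"
  by (induction \<phi>s rule: big_and.induct) auto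

lemma sat_big_or: "sat I \<sigma> (big_or \<phi>s) \<longleftrightarrow> (\<exists>\<phi>\<in>set \<phi>s. sat I \<sigma> \<phi>)"
  by (induction \<phi>s rule: big_or.induct) auto

lemma set_enum_set: "finite S \<Longrightarrow> set (enum_set S) = S"
  unfolding enum_set_def by (rule someI_ex) (rule finite_list)

lemma ex_until_unfold:
  "(\<exists>j. P j \<and> (\<forall>k<j. Q k)) \<longleftrightarrow> P 0 \<or> Q 0 \<and> (\<exists>j. P (Suc j) \<and> (\<forall>k<j. Q (Suc k)))"
proof
  assume "\<exists>j. P j \<and> (\<forall>k<j. Q k)"
  then obtain j where "P j" "\<forall>k<j. Q k" by blast
  then show "P 0 \<or> Q 0 \<and> (\<exists>j. P (Suc j) \<and> (\<forall>k<j. Q (Suc k)))"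
    by (cases j) auto
next
  assume "P 0 \<or> Q 0 \<and> (\<exists>j. P (Suc j) \<and> (\<forall>k<j. Q (Suc k)))"
  then show "\<exists>j. P j \<and> (\<forall>k<j. Q k)"
  proof
    assume "P 0"
    then show ?thesis by blast
  next
    assume "Q 0 \<and> (\<exists>j. P (Suc j) \<and> (\<forall>k<j. Q (Suc k)))"
    then obtain j where "Q 0" "P (Suc j)" "\<forall>k<j. Q (Suc k)" by blast
    then have "\<forall>k<Suc j. Q k" by (auto simp: less_Suc_eq_0_disj)
    with \<open>P (Suc j)\<close> show ?thesis by blast
  qed
qed

lemma all_release_unfold:
  "(\<forall>j. P j \<or> (\<exists>k<j. Q k)) \<longleftrightarrow> P 0 \<and> (Q 0 \<or> (\<forall>j. P (Suc j) \<or> (\<exists>k<j. Q (Suc k))))"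
  using ex_until_unfold[of "\<lambda>j. \<not> P j" "\<lambda>k. \<not> Q k"] by blast

lemma suffix_0 [simp]: "suffix 0 \<sigma> = \<sigma>"
  by (simp add: suffix_def)

lemma suffix_Suc: "suffix (Suc j) \<sigma> = suffix j (suffix 1 \<sigma>)"
  by (simp add: suffix_def)

lemma sat_Until_unfold:
  "sat I \<sigma> (Until \<phi> \<psi>) \<longleftrightarrow> sat I \<sigma> \<psi> \<or> sat I \<sigma> \<phi> \<and> sat I (suffix 1 \<sigma>) (Until \<phi> \<psi>)"
proof -
  have "sat I \<sigma> (Until \<phi> \<psi>) \<longleftrightarrow> (\<exists>j. sat I (suffix j \<sigma>) \<psi> \<and> (\<forall>k<j. sat I (suffix k \<sigma>) \<phi>))"
    by (rule sat.simps)
  also have "\<dots> \<longleftrightarrow> sat I (suffix 0 \<sigma>) \<psi> \<or> sat I (suffix 0 \<sigma>) \<phi> \<and>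
      (\<exists>j. sat I (suffix (Suc j) \<sigma>) \<psi> \<and> (\<forall>k<j. sat I (suffix (Suc k) \<sigma>) \<phi>))"
    by (rule ex_until_unfold)
  finally show ?thesis
    by (simp only: suffix_0 suffix_Suc sat.simps)
qed

lemma sat_Release_unfold:
  "sat I \<sigma> (Release \<phi> \<psi>) \<longleftrightarrow>
     sat I \<sigma> \<phi> \<and> sat I \<sigma> \<psi> \<or> sat I \<sigma> \<psi> \<and> sat I (suffix 1 \<sigma>) (Release \<phi> \<psi>)"
proof -
  have "sat I \<sigma> (Release \<phi> \<psi>) \<longleftrightarrow> (\<forall>j. sat I (suffix j \<sigma>) \<psi> \<or> (\<exists>k<j. sat I (suffix k \<sigma>) \<phi>))"
    by (rule sat.simps)
  also have "\<dots> \<longleftrightarrow> sat I (suffix 0 \<sigma>) \<psi> \<and> (sat I (suffix 0 \<sigma>) \<phi> \<or>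
      (\<forall>j. sat I (suffix (Suc j) \<sigma>) \<psi> \<or> (\<exists>k<j. sat I (suffix (Suc k) \<sigma>) \<phi>)))"
    by (rule all_release_unfold)
  finally show ?thesis
    by (simp only: suffix_0 suffix_Suc sat.simps) blast
qed

fun sat_mono :: "('s \<Rightarrow> 'a set) \<Rightarrow> (nat \<Rightarrow> 's) \<Rightarrow> 'a monomial \<Rightarrow> bool" where
  "sat_mono I \<sigma> None \<longleftrightarrow> False"
| "sat_mono I \<sigma> (Some L) \<longleftrightarrow> (\<forall>l\<in>L. sat I \<sigma> (lit_formula l))"

lemma sat_neg_lit: "sat I \<sigma> (lit_formula (neg_lit l)) \<longleftrightarrow> \<not> sat I \<sigma> (lit_formula l)"
  by (cases l) auto

lemma sat_mono_consistent: "sat_mono I \<sigma> (Some L) \<Longrightarrow> l \<in> L \<Longrightarrow> neg_lit l \<notin> L"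
  using sat_neg_lit[of I \<sigma> l] by auto

lemma sat_mono_smart_conj:
  "sat_mono I \<sigma> (smart_conj \<mu> \<nu>) \<longleftrightarrow> sat_mono I \<sigma> \<mu> \<and> sat_mono I \<sigma> \<nu>"
proof (cases \<mu>; cases \<nu>)
  fix L M assume "\<mu> = Some L" "\<nu> = Some M"
  moreover have "\<not> (\<exists>l \<in> L \<union> M. neg_lit l \<in> L \<union> M)" if "sat_mono I \<sigma> (Some (L \<union> M))"
    using sat_mono_consistent[OF that] by blast
  ultimately show ?thesis
    by auto
qed auto

lemma finite_smart_conj:
  "pred_option finite \<mu> \<Longrightarrow> pred_option finite \<nu> \<Longrightarrow> pred_option finite (smart_conj \<mu> \<nu>)"
  by (cases \<mu>; cases \<nu>) auto

lemma sat_Theta_mono: "pred_option finite \<mu> \<Longrightarrow> sat I \<sigma> (Theta_mono \<mu>) \<longleftrightarrow> sat_mono I \<sigma> \<mu>"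
  by (cases \<mu>) (auto simp: sat_big_and set_enum_set)

lemma sat_conj_formula: "finite A \<Longrightarrow> sat I \<sigma> (conj_formula A) \<longleftrightarrow> (\<forall>\<psi>\<in>A. sat I \<sigma> \<psi>)"
  by (simp add: conj_formula_def sat_big_and set_enum_set)

definition sat_factors :: "('s \<Rightarrow> 'a set) \<Rightarrow> (nat \<Rightarrow> 's) \<Rightarrow> ('a monomial \<times> 'a fconj) set \<Rightarrow> bool"
  where "sat_factors I \<sigma> S \<longleftrightarrow> (\<exists>(\<mu>, A)\<in>S. sat_mono I \<sigma> \<mu> \<and> (\<forall>\<psi>\<in>A. sat I (suffix 1 \<sigma>) \<psi>))"

definition finite_factors :: "('a monomial \<times> 'a fconj) set \<Rightarrow> bool"
  where "finite_factors S \<longleftrightarrow> finite S \<and> (\<forall>(\<mu>, A)\<in>S. pred_option finite \<mu> \<and> finite A)"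

definition conj_factors ::
    "('a monomial \<times> 'a fconj) set \<Rightarrow> ('a monomial \<times> 'a fconj) set \<Rightarrow> ('a monomial \<times> 'a fconj) set"
  where "conj_factors S T = {(smart_conj \<mu> \<nu>, A \<union> B) | \<mu> A \<nu> B.
           (\<mu>, A) \<in> S \<and> (\<nu>, B) \<in> T \<and> smart_conj \<mu> \<nu> \<noteq> None}"

definition add_next :: "'a ltl \<Rightarrow> ('a monomial \<times> 'a fconj) set \<Rightarrow> ('a monomial \<times> 'a fconj) set"
  where "add_next \<chi> S = {(\<mu>, A \<union> {\<chi>}) | \<mu> A. (\<mu>, A) \<in> S}"

lemma LF_And: "LF (And \<phi> \<psi>) = conj_factors (LF \<phi>) (LF \<psi>)"
  by (simp add: conj_factors_def)

lemma LF_Until: "LF (Until \<phi> \<psi>) = LF \<psi> \<union> add_next (Until \<phi> \<psi>) (LF \<phi>)"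
  by (simp add: add_next_def)

lemma LF_Release:
  "LF (Release \<phi> \<psi>) = conj_factors (LF \<phi>) (LF \<psi>) \<union> add_next (Release \<phi> \<psi>) (LF \<psi>)"
  by (simp add: conj_factors_def add_next_def)

lemma sat_factors_Un:
  "sat_factors I \<sigma> (S \<union> T) \<longleftrightarrow> sat_factors I \<sigma> S \<or> sat_factors I \<sigma> T"
  unfolding sat_factors_def by blast

lemma sat_conj_factors:
  "sat_factors I \<sigma> (conj_factors S T) \<longleftrightarrow> sat_factors I \<sigma> S \<and> sat_factors I \<sigma> T"
proof
  assume "sat_factors I \<sigma> (conj_factors S T)"
  then obtain \<mu> A \<nu> B where "(\<mu>, A) \<in> S" "(\<nu>, B) \<in> T"
    and "sat_mono I \<sigma> (smart_conj \<mu> \<nu>)" "\<forall>\<psi>\<in>A \<union> B. sat I (suffix 1 \<sigma>) \<psi>"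
    unfolding sat_factors_def conj_factors_def by blast
  then show "sat_factors I \<sigma> S \<and> sat_factors I \<sigma> T"
    unfolding sat_factors_def sat_mono_smart_conj by auto
next
  assume "sat_factors I \<sigma> S \<and> sat_factors I \<sigma> T"
  then obtain \<mu> A \<nu> B where factors: "(\<mu>, A) \<in> S" "(\<nu>, B) \<in> T"
    and "sat_mono I \<sigma> \<mu>" "sat_mono I \<sigma> \<nu>"
    and "\<forall>\<psi>\<in>A. sat I (suffix 1 \<sigma>) \<psi>" "\<forall>\<psi>\<in>B. sat I (suffix 1 \<sigma>) \<psi>"
    unfolding sat_factors_def by blast
  then have sat_next: "\<forall>\<psi>\<in>A \<union> B. sat I (suffix 1 \<sigma>) \<psi>"
    and sat_now: "sat_mono I \<sigma> (smart_conj \<mu> \<nu>)"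
    by (auto simp: sat_mono_smart_conj)
  from sat_now have "smart_conj \<mu> \<nu> \<noteq> None"
    by (metis sat_mono.simps(1))
  with factors have "(smart_conj \<mu> \<nu>, A \<union> B) \<in> conj_factors S T"
    unfolding conj_factors_def by blast
  with sat_now sat_next show "sat_factors I \<sigma> (conj_factors S T)"
    unfolding sat_factors_def by blast
qed

lemma sat_add_next:
  "sat_factors I \<sigma> (add_next \<chi> S) \<longleftrightarrow> sat_factors I \<sigma> S \<and> sat I (suffix 1 \<sigma>) \<chi>"
  unfolding sat_factors_def add_next_def by blast

lemma finite_factors_Un:
  "finite_factors S \<Longrightarrow> finite_factors T \<Longrightarrow> finite_factors (S \<union> T)"
  unfolding finite_factors_def by blast

lemma finite_conj_factors:
  assumes "finite_factors S" "finite_factors T"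
  shows "finite_factors (conj_factors S T)"
proof -
  have "conj_factors S T \<subseteq> (\<lambda>((\<mu>, A), (\<nu>, B)). (smart_conj \<mu> \<nu>, A \<union> B)) ` (S \<times> T)"
    unfolding conj_factors_def by force
  moreover have "finite (S \<times> T)"
    using assms by (simp add: finite_factors_def)
  ultimately have "finite (conj_factors S T)"
    by (rule finite_subset[OF _ finite_imageI])
  with assms show ?thesis
    unfolding finite_factors_def conj_factors_def by (fastforce intro: finite_smart_conj)
qed

lemma finite_add_next:
  assumes "finite_factors S"
  shows "finite_factors (add_next \<chi> S)"
proof -
  have "add_next \<chi> S = (\<lambda>(\<mu>, A). (\<mu>, A \<union> {\<chi>})) ` S"
    unfolding add_next_def by auto
  with assms show ?thesis
    unfolding finite_factors_def by auto
qed

lemma sat_Theta_LF: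
  assumes "finite_factors S"
  shows "sat I \<sigma> (Theta_LF S) \<longleftrightarrow> sat_factors I \<sigma> S"
proof -
  have "finite S"
    using assms by (simp add: finite_factors_def)
  have "sat I \<sigma> (case x of (\<mu>, A) \<Rightarrow> And (Theta_mono \<mu>) (Next (conj_formula A)))
      \<longleftrightarrow> (case x of (\<mu>, A) \<Rightarrow> sat_mono I \<sigma> \<mu> \<and> (\<forall>\<psi>\<in>A. sat I (suffix 1 \<sigma>) \<psi>))"
    if "x \<in> S" for x
    using assms that by (auto simp: finite_factors_def sat_Theta_mono sat_conj_formula)
  then have "(\<exists>x\<in>S. sat I \<sigma> (case x of (\<mu>, A) \<Rightarrow> And (Theta_mono \<mu>) (Next (conj_formula A))))
      \<longleftrightarrow> sat_factors I \<sigma> S"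
    unfolding sat_factors_def by (rule bex_cong[OF refl])
  then show ?thesis
    unfolding Theta_LF_def sat_big_or set_map set_enum_set[OF \<open>finite S\<close>] by blast
qed

lemma finite_simp_ltl: "finite (simp_ltl \<phi>) \<and> (\<forall>A\<in>simp_ltl \<phi>. finite A)"
proof (induction \<phi> rule: simp_ltl.induct)
  case (1 \<phi> \<psi>)
  have "simp_ltl (And \<phi> \<psi>) = (\<lambda>(A, B). A \<union> B) ` (simp_ltl \<phi> \<times> simp_ltl \<psi>)"
    by auto
  with 1 show ?case
    by auto
qed (auto simp: fc_def)

lemma sat_simp_ltl: "sat I \<sigma> \<phi> \<longleftrightarrow> (\<exists>A\<in>simp_ltl \<phi>. \<forall>\<psi>\<in>A. sat I \<sigma> \<psi>)"
  by (induction \<phi> rule: simp_ltl.induct) (auto simp: fc_def)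

lemma finite_factors_LF: "finite_factors (LF \<phi>)"
proof (induction \<phi>)
  case (Next \<phi>)
  have "LF (Next \<phi>) = (\<lambda>A. (Some {}, A)) ` simp_ltl \<phi>"
    by auto
  with finite_simp_ltl[of \<phi>] show ?case
    unfolding finite_factors_def by auto
qed (simp_all only: LF_And LF_Until LF_Release LF.simps finite_factors_Un finite_conj_factors
  finite_add_next, auto simp: finite_factors_def)

lemma sat_factors_LF: "sat_factors I \<sigma> (LF \<phi>) \<longleftrightarrow> sat I \<sigma> \<phi>"
proof (induction \<phi> arbitrary: \<sigma>)
  case (And \<phi> \<psi>)
  show ?case
    by (simp only: LF_And sat_conj_factors And.IH sat.simps)
next
  case (Or \<phi> \<psi>)
  show ?case
    by (simp only: LF.simps sat_factors_Un Or.IH sat.simps)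
next
  case (Next \<phi>)
  show ?case
    unfolding sat_factors_def sat.simps(7) sat_simp_ltl[of I "suffix 1 \<sigma>" \<phi>] by auto
next
  case (Until \<phi> \<psi>)
  show ?case
    by (simp only: LF_Until sat_factors_Un sat_add_next Until.IH sat_Until_unfold[of I \<sigma>])
next
  case (Release \<phi> \<psi>)
  show ?case
    by (simp only: LF_Release sat_factors_Un sat_add_next sat_conj_factors Release.IH
        sat_Release_unfold[of I \<sigma>])
qed (auto simp: sat_factors_def)

theorem theorem2:
  fixes \<phi> :: "'a ltl"
  shows "\<forall>(I :: 's \<Rightarrow> 'a set) (\<sigma> :: nat \<Rightarrow> 's). sat I \<sigma> (Theta_LF (LF \<phi>)) = sat I \<sigma> \<phi>"
  using sat_Theta_LF[OF finite_factors_LF] sat_factors_LF by blast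

end
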